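(* Let $\mathcal N$ be a network with parties $A_1,\dots,A_n$ all of whose sources are bipartite (each source is adjacent to exactly two parties), and let $p(a_1,\dots,a_n)$ be the output distribution of a causally consistent model on $\mathcal N$ (finite output alphabets). For each $i$ let $f_i$ be an arbitrary real-valued function of the output $a_i$. Then the covariance matrix $\mathcal C(f_1,\dots,f_n)$ admits an $\mathcal N$-compatible matrix decomposition.
   Context: A network $\mathcal N$ is a bipartite graph between sources $S_\alpha$ ($\alpha=1,\dots,m$) and parties $A_i$ ($i=1,\dots,n$); $\alpha\to i$ means $S_\alpha$ is adjacent to $A_i$. Every source has at least one adjacent party, every party has at least one adjacent source, and no two sources have comparable (under inclusion) sets of adjacent parties. Covariance matrix: for functions $f_i(a_i)$ and a joint distribution $p$ of outputs, $\mathcal C=\mathcal C(f_1,\dots,f_n)$ is the $n\times n$ matrix with $\mathcal C_{ij}=\mathbb E[\bar f_i f_j]-\mathbb E[\bar f_i]\,\mathbb E[f_j]$. $\mathcal N$-compatible matrix decomposition: for each source $\alpha$, let $\mathcal L_\alpha$ be the set of $n\times n$ complex positive semidefinite matrices $M_\alpha$ with $(M_\alpha)_{ij}\neq 0$ only if $\alpha\to i$ and $\alpha\to j$. A positive semidefinite $n\times n$ matrix $M$ admits an $\mathcal N$-compatible matrix decomposition if $M=\sum_\alpha M_\alpha$ with $M_\alpha\in\mathcal L_\alpha$ for all $\alpha$. Non-fanout inflation of order $d\ge 2$: choose, for every pair $(\alpha,i)$ with $\alpha\to i$, a permutation $\pi_i^\alpha$ of $\{1,\dots,d\}$. The inflated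 network $\widetilde{\mathcal N}$ has parties $A_i^{(k)}$ and sources $S_\alpha^{(k)}$ ($1\le k\le d$), with $S_\alpha^{(k)}$ adjacent to $A_i^{((\pi_i^\alpha)^{-1}(k))}$ whenever $\alpha\to i$, and no other adjacencies. Causally consistent model on $\mathcal N$: a joint distribution $p(a_1,\dots,a_n)$ of the outputs of $\mathcal N$ together with, for every non-fanout inflation $\widetilde{\mathcal N}$ of every order $d\ge2$, a joint distribution of the outputs $a_i^{(k)}$ of its parties, such that: (C0) if $A_i\neq A_j$ share no source in $\mathcal N$, then $p(a_i,a_j)=p(a_i)p(a_j)$; (C1) in every inflation, each $a_i^{(k)}$ has marginal distribution $p(a_i)$, and if $A_i^{(k)}$ and $A_j^{(l)}$ with $i\neq j$ share a source in $\widetilde{\mathcal N}$, then the joint distribution of $(a_i^{(k)},a_j^{(l)})$ equals $p(a_i,a_j)$; (C2) in every inflation, if two distinct parties share no source, the joint distribution of their outputs factorizes into the product of their marginals. *)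

theory Defs
  imports "HOL-Probability.Probability_Mass_Function"
begin

text \<open>Networks: sources of finite type 's, parties of finite type 'p,
  adjacency adj alpha i means "S_alpha -> A_i".\<close>

definition parties_of :: "('s \<Rightarrow> 'p \<Rightarrow> bool) \<Rightarrow> 's \<Rightarrow> 'p set" where
  "parties_of adj \<alpha> = {i. adj \<alpha> i}"

definition network :: "('s::finite \<Rightarrow> 'p::finite \<Rightarrow> bool) \<Rightarrow> bool" where
  "network adj \<longleftrightarrow>
     (\<forall>\<alpha>. \<exists>i. adj \<alpha> i) \<and>
     (\<forall>i. \<exists>\<alpha>. adj \<alpha> i) \<and>
     (\<forall>\<alpha> \<beta>. \<alpha> \<noteq> \<beta> \<longrightarrow> \<not> (parties_of adj \<alpha> \<subseteq> parties_of adj \<beta>))"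

definition bipartite_sources :: "('s \<Rightarrow> 'p \<Rightarrow> bool) \<Rightarrow> bool" where
  "bipartite_sources adj \<longleftrightarrow> (\<forall>\<alpha>. card (parties_of adj \<alpha>) = 2)"

definition share_source :: "('s \<Rightarrow> 'p \<Rightarrow> bool) \<Rightarrow> 'p \<Rightarrow> 'p \<Rightarrow> bool" where
  "share_source adj i j \<longleftrightarrow> (\<exists>\<alpha>. adj \<alpha> i \<and> adj \<alpha> j)"

text \<open>Non-fanout inflation of order d: pi alpha i is a permutation of {1..d}
  whenever alpha -> i. Inflated party (i,k), k in {1..d}, is adjacent to the
  inflated source S_alpha^(pi alpha i k).\<close>

definition inflation_perms :: "('s \<Rightarrow> 'p \<Rightarrow> bool) \<Rightarrow> nat \<Rightarrow> ('s \<Rightarrow> 'p \<Rightarrow> nat \<Rightarrow> nat) \<Rightarrow> bool" where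
  "inflation_perms adj d \<pi> \<longleftrightarrow> 2 \<le> d \<and>
     (\<forall>\<alpha> i. adj \<alpha> i \<longrightarrow> bij_betw (\<pi> \<alpha> i) {1..d} {1..d})"

definition infl_share_source ::
  "('s \<Rightarrow> 'p \<Rightarrow> bool) \<Rightarrow> ('s \<Rightarrow> 'p \<Rightarrow> nat \<Rightarrow> nat) \<Rightarrow> 'p \<times> nat \<Rightarrow> 'p \<times> nat \<Rightarrow> bool" where
  "infl_share_source adj \<pi> x y \<longleftrightarrow>
     (\<exists>\<alpha>. adj \<alpha> (fst x) \<and> adj \<alpha> (fst y) \<and> \<pi> \<alpha> (fst x) (snd x) = \<pi> \<alpha> (fst y) (snd y))"

definition marg1 :: "('i \<Rightarrow> 'a) pmf \<Rightarrow> 'i \<Rightarrow> 'a pmf" where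
  "marg1 q i = map_pmf (\<lambda>a. a i) q"

definition marg2 :: "('i \<Rightarrow> 'a) pmf \<Rightarrow> 'i \<Rightarrow> 'i \<Rightarrow> ('a \<times> 'a) pmf" where
  "marg2 q i j = map_pmf (\<lambda>a. (a i, a j)) q"

definition causally_consistent ::
  "('s::finite \<Rightarrow> 'p::finite \<Rightarrow> bool) \<Rightarrow> ('p \<Rightarrow> 'a) pmf \<Rightarrow> bool" where
  "causally_consistent adj p \<longleftrightarrow>
     (\<forall>i j. i \<noteq> j \<and> \<not> share_source adj i j \<longrightarrow>
        marg2 p i j = pair_pmf (marg1 p i) (marg1 p j)) \<and>
     (\<forall>d \<pi>. inflation_perms adj d \<pi> \<longrightarrow>
        (\<exists>q :: ('p \<times> nat \<Rightarrow> 'a) pmf.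
           (\<forall>i k. k \<in> {1..d} \<longrightarrow> marg1 q (i, k) = marg1 p i) \<and>
           (\<forall>i j k l. i \<noteq> j \<and> k \<in> {1..d} \<and> l \<in> {1..d} \<and>
              infl_share_source adj \<pi> (i, k) (j, l) \<longrightarrow>
              marg2 q (i, k) (j, l) = marg2 p i j) \<and>
           (\<forall>x y. x \<noteq> y \<and> snd x \<in> {1..d} \<and> snd y \<in> {1..d} \<and>
              \<not> infl_share_source adj \<pi> x y \<longrightarrow>
              marg2 q x y = pair_pmf (marg1 q x) (marg1 q y))))"

definition cov_matrix :: "('p \<Rightarrow> 'a) pmf \<Rightarrow> ('p \<Rightarrow> 'a \<Rightarrow> complex) \<Rightarrow> 'p \<Rightarrow> 'p \<Rightarrow> complex" where
  "cov_matrix p f i j =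
     measure_pmf.expectation p (\<lambda>a. cnj (f i (a i)) * f j (a j))
     - cnj (measure_pmf.expectation p (\<lambda>a. f i (a i))) * measure_pmf.expectation p (\<lambda>a. f j (a j))"

definition psd :: "('p::finite \<Rightarrow> 'p \<Rightarrow> complex) \<Rightarrow> bool" where
  "psd M \<longleftrightarrow> (\<forall>i j. M j i = cnj (M i j)) \<and>
     (\<forall>v. 0 \<le> Re (\<Sum>i\<in>UNIV. \<Sum>j\<in>UNIV. cnj (v i) * M i j * v j))"

definition N_compatible_decomp ::
  "('s::finite \<Rightarrow> 'p::finite \<Rightarrow> bool) \<Rightarrow> ('p \<Rightarrow> 'p \<Rightarrow> complex) \<Rightarrow> bool" where
  "N_compatible_decomp adj M \<longleftrightarrow>
     (\<exists>L :: 's \<Rightarrow> 'p \<Rightarrow> 'p \<Rightarrow> complex.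
        (\<forall>\<alpha>. psd (L \<alpha>) \<and> (\<forall>i j. L \<alpha> i j \<noteq> 0 \<longrightarrow> adj \<alpha> i \<and> adj \<alpha> j)) \<and>
        (\<forall>i j. M i j = (\<Sum>\<alpha>\<in>UNIV. L \<alpha> i j)))"

end

theory Submission
  imports Defs "HOL-Combinatorics.Transposition"
begin

text \<open>
  For real f the covariance matrix C is real, symmetric and positive semidefinite, and by (C0) it
  vanishes off the pairs of parties sharing a source; as every source is bipartite, C is supported
  on the edges of the graph whose vertices are the parties and whose edges are the sources.
  Consider the inflation of order two in which the two copies of a source are crossed exactly when
  the covariance of its two parties is positive. There the differences
  D_i = f_i(a_i^(1)) - f_i(a_i^(2)) have second-moment matrix 2K, where K is the comparison matrix
  of C (diagonal C_ii, off-diagonal -|C_ij|), so K is positive semidefinite. A positive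
  semidefinite symmetric Z-matrix K admits a positive vector u with K u \<ge> 0 (induction via Schur
  complements), i.e. diag(u) K diag(u) is diagonally dominant. Splitting the diagonal of C along the
  edges with the weights u gives a positive semidefinite 2x2 block for each source, and these
  blocks sum to C.
\<close>

section \<open>Quadratic forms and Z-matrices\<close>

lemma integrable_measure_pmf_finite_type [simp, intro]:
  fixes M :: "'b::finite pmf" and g :: "'b \<Rightarrow> 'c::{banach, second_countable_topology}"
  shows "integrable (measure_pmf M) g"
  by (rule integrable_measure_pmf_finite) simp

definition quad_form :: "'i set \<Rightarrow> ('i \<Rightarrow> 'i \<Rightarrow> real) \<Rightarrow> ('i \<Rightarrow> real) \<Rightarrow> real" where
  "quad_form S K x = (\<Sum>i\<in>S. \<Sum>j\<in>S. x i * K i j * x j)"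

lemma psd_of_real:
  fixes R :: "'p::finite \<Rightarrow> 'p \<Rightarrow> real"
  assumes sym: "\<And>i j. R i j = R j i" and nonneg: "\<And>x. 0 \<le> quad_form UNIV R x"
  shows "psd (\<lambda>i j. complex_of_real (R i j))"
  unfolding psd_def
proof (intro conjI allI)
  fix v :: "'p \<Rightarrow> complex"
  have "Re (\<Sum>i\<in>UNIV. \<Sum>j\<in>UNIV. cnj (v i) * complex_of_real (R i j) * v j) =
      quad_form UNIV R (\<lambda>i. Re (v i)) + quad_form UNIV R (\<lambda>i. Im (v i))"
    by (simp add: quad_form_def Re_sum sum.distrib[symmetric] algebra_simps)
  then show "0 \<le> Re (\<Sum>i\<in>UNIV. \<Sum>j\<in>UNIV. cnj (v i) * complex_of_real (R i j) * v j)"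
    using nonneg by simp
qed (use sym in simp)

lemma quad_form_cmult: "quad_form S (\<lambda>i j. c * K i j) x = c * quad_form S K x"
  unfolding quad_form_def by (simp add: sum_distrib_left algebra_simps)

lemma quad_form_mono_neutral:
  assumes "finite T" "S \<subseteq> T" "\<And>i j. i \<notin> S \<or> j \<notin> S \<Longrightarrow> K i j = 0"
  shows "quad_form T K x = quad_form S K x"
proof -
  have "(\<Sum>j\<in>T. x i * K i j * x j) = (\<Sum>j\<in>S. x i * K i j * x j)" if "i \<in> S" for i
    using assms that by (intro sum.mono_neutral_right) auto
  moreover have "(\<Sum>j\<in>T. x i * K i j * x j) = 0" if "i \<notin> S" for i
    using assms(3) that by simp
  ultimately show ?thesis
    unfolding quad_form_def using assms(1,2)
    by (subst sum.mono_neutral_right[of T S]) auto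
qed

lemma quad_form_second_moments_nonneg:
  fixes Q :: "'b::finite pmf" and X :: "'i::finite \<Rightarrow> 'b \<Rightarrow> real"
  shows "0 \<le> quad_form UNIV (\<lambda>i j. measure_pmf.expectation Q (\<lambda>b. X i b * X j b)) x"
proof -
  have square: "(\<Sum>i\<in>UNIV. x i * X i b)\<^sup>2 = (\<Sum>i\<in>UNIV. \<Sum>j\<in>UNIV. x i * (X i b * X j b) * x j)" for b
    unfolding power2_eq_square sum_product by (simp add: ac_simps)
  have "quad_form UNIV (\<lambda>i j. measure_pmf.expectation Q (\<lambda>b. X i b * X j b)) x =
      measure_pmf.expectation Q (\<lambda>b. (\<Sum>i\<in>UNIV. x i * X i b)\<^sup>2)"
    unfolding quad_form_def square
    by (simp add: Bochner_Integration.integral_sum integral_mult_left_zero integral_mult_right_zero)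
  also have "\<dots> \<ge> 0" by simp
  finally show ?thesis .
qed

lemma quad_form_insert:
  fixes K :: "'i \<Rightarrow> 'i \<Rightarrow> real"
  assumes fin: "finite S" and i: "i \<notin> S" and sym: "\<And>l. l \<in> S \<Longrightarrow> K l i = K i l"
  shows "quad_form (insert i S) K (y(i := t)) =
    K i i * t\<^sup>2 + 2 * t * (\<Sum>l\<in>S. K i l * y l) + quad_form S K y"
proof -
  have yS: "(y(i := t)) l = y l" if "l \<in> S" for l
    using i that by auto
  have "quad_form (insert i S) K (y(i := t)) =
      t * K i i * t + (\<Sum>l\<in>S. t * K i l * y l) + (\<Sum>l\<in>S. y l * K l i * t) + quad_form S K y"
    unfolding quad_form_def using fin i yS by (simp add: sum.distrib add.assoc cong: sum.cong)
  also have "(\<Sum>l\<in>S. y l * K l i * t) = (\<Sum>l\<in>S. t * K i l * y l)"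
    using sym by (intro sum.cong) auto
  finally show ?thesis
    by (simp add: power2_eq_square sum_distrib_left algebra_simps fun_upd_def)
qed

lemma quad_form_nonneg_diag:
  fixes K :: "'i \<Rightarrow> 'i \<Rightarrow> real"
  assumes "finite S" "i \<in> S" "\<And>y. 0 \<le> quad_form S K y"
  shows "0 \<le> K i i"
proof -
  have "quad_form S K (\<lambda>j. if j = i then 1 else 0) = K i i"
    unfolding quad_form_def using assms(1,2)
    by (simp add: if_distrib[of "\<lambda>x. x * _"] if_distrib[of "\<lambda>x. _ * x"] cong: if_cong)
  then show ?thesis using assms(3) by metis
qed

(* For K i i = 0 the division gives 0, so the complement is just K on S. *)
lemma quad_form_schur_complement_nonneg:
  fixes K :: "'i \<Rightarrow> 'i \<Rightarrow> real"
  assumes fin: "finite S" and i: "i \<notin> S" and sym: "\<And>l. l \<in> S \<Longrightarrow> K l i = K i l"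
    and nonneg: "\<And>y. 0 \<le> quad_form (insert i S) K y"
  shows "0 \<le> quad_form S (\<lambda>j l. K j l - K j i * K i l / K i i) y"
proof -
  define b where "b = (\<Sum>l\<in>S. K i l * y l)"
  have "quad_form S (\<lambda>j l. K j l - K j i * K i l / K i i) y =
      quad_form S K y - (\<Sum>j\<in>S. \<Sum>l\<in>S. (y j * K i j) * (K i l * y l)) / K i i"
    unfolding quad_form_def using sym
    by (simp add: sum_subtractf sum_divide_distrib algebra_simps cong: sum.cong)
  also have "\<dots> = quad_form S K y - b\<^sup>2 / K i i"
    unfolding b_def sum_product[symmetric] power2_eq_square by (simp add: mult.commute)
  also have "\<dots> = quad_form (insert i S) K (y(i := - b / K i i))"
    using quad_form_insert[where K = K and y = y and t = "- b / K i i", OF fin i sym]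
    unfolding b_def[symmetric]
    by (cases "K i i = 0") (simp_all add: field_simps power2_eq_square)
  finally show ?thesis using nonneg by simp
qed

lemma Z_matrix_positive_vector_insert:
  fixes K :: "'i \<Rightarrow> 'i \<Rightarrow> real"
  assumes fin: "finite S" and i: "i \<notin> S"
    and sym: "\<And>l. l \<in> S \<Longrightarrow> K l i = K i l"
    and Z: "\<And>l. l \<in> S \<Longrightarrow> K i l \<le> 0"
    and nonneg: "\<And>y. 0 \<le> quad_form (insert i S) K y"
    and pos: "\<And>l. l \<in> S \<Longrightarrow> 0 < v l"
    and rows: "\<And>j. j \<in> S \<Longrightarrow> 0 \<le> (\<Sum>l\<in>S. (K j l - K j i * K i l / K i i) * v l)"
  obtains u where "\<And>l. l \<in> insert i S \<Longrightarrow> 0 < u l"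
    and "\<And>j. j \<in> insert i S \<Longrightarrow> 0 \<le> (\<Sum>l\<in>insert i S. K j l * u l)"
proof -
  define d where "d = K i i"
  define s where "s = (\<Sum>l\<in>S. - K i l * v l)"
  have form: "0 \<le> d * t\<^sup>2 - 2 * t * s + quad_form S K v" for t
    using nonneg[of "v(i := t)"] quad_form_insert[where K = K, OF fin i sym]
    by (simp add: d_def s_def sum_negf)
  have d: "0 \<le> d"
    unfolding d_def by (rule quad_form_nonneg_diag[of "insert i S"]) (use fin nonneg in auto)
  have terms: "0 \<le> - K i l * v l" if "l \<in> S" for l
    using Z[OF that] pos[OF that] by (simp add: mult_nonpos_nonneg)
  then have s: "0 \<le> s"
    unfolding s_def by (rule sum_nonneg)
  have row_off_i: "K i l = 0" if "s = 0" "l \<in> S" for l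
  proof -
    have "(\<Sum>l\<in>S. - K i l * v l) = 0 \<longleftrightarrow> (\<forall>l\<in>S. - K i l * v l = 0)"
      by (rule sum_nonneg_eq_0_iff[OF fin]) (rule terms)
    then have "- K i l * v l = 0"
      using that unfolding s_def by blast
    then show ?thesis using pos[OF \<open>l \<in> S\<close>] by simp
  qed
  have d_pos: "0 < d" if "s \<noteq> 0"
  proof (rule ccontr)
    assume "\<not> 0 < d"
    with d have "d = 0" by simp
    define t where "t = (quad_form S K v + 1) / (2 * s)"
    have "d * t\<^sup>2 - 2 * t * s + quad_form S K v = -1"
      using \<open>d = 0\<close> that by (simp add: t_def field_simps)
    with form[of t] show False
      by simp
  qed
  define u where "u = v(i := (if s = 0 then 1 else s / d))"
  show thesis
  proof
    show "0 < u l" if "l \<in> insert i S" for l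
      using that pos d_pos s unfolding u_def by auto
    fix j assume j: "j \<in> insert i S"
    have "(\<Sum>l\<in>S. K j l * u l) = (\<Sum>l\<in>S. K j l * v l)"
      using i by (intro sum.cong) (auto simp: u_def)
    then have sum_u: "(\<Sum>l\<in>insert i S. K j l * u l) = K j i * u i + (\<Sum>l\<in>S. K j l * v l)"
      using fin i by simp
    show "0 \<le> (\<Sum>l\<in>insert i S. K j l * u l)"
    proof (cases "j = i")
      case True
      then have "(\<Sum>l\<in>insert i S. K j l * u l) = d * u i - s"
        unfolding sum_u by (simp add: d_def s_def sum_negf)
      moreover have "0 \<le> d * u i - s"
        using d d_pos by (cases "s = 0") (simp_all add: u_def)
      ultimately show ?thesis by simp
    next
      case False
      with j have "j \<in> S" by simp
      have row_j: "(\<Sum>l\<in>S. (K j l - K j i * K i l / K i i) * v l) = (\<Sum>l\<in>S. K j l * v l) + K j i * s / d"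
        unfolding s_def d_def
        by (simp add: algebra_simps sum_subtractf sum_divide_distrib sum_distrib_left sum_negf)
      have "K j i * u i = K j i * s / d"
      proof (cases "s = 0")
        case True
        then show ?thesis using row_off_i[OF True \<open>j \<in> S\<close>] sym[OF \<open>j \<in> S\<close>] by simp
      qed (simp add: u_def)
      then show ?thesis
        using rows[OF \<open>j \<in> S\<close>] unfolding sum_u row_j by simp
    qed
  qed
qed

lemma psd_Z_matrix_positive_vector:
  fixes K :: "'i \<Rightarrow> 'i \<Rightarrow> real"
  assumes "finite S"
    and "\<And>i j. i \<in> S \<Longrightarrow> j \<in> S \<Longrightarrow> K i j = K j i"
    and "\<And>i j. i \<in> S \<Longrightarrow> j \<in> S \<Longrightarrow> i \<noteq> j \<Longrightarrow> K i j \<le> 0"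
    and "\<And>y. 0 \<le> quad_form S K y"
  shows "\<exists>u. (\<forall>i\<in>S. 0 < u i) \<and> (\<forall>i\<in>S. 0 \<le> (\<Sum>j\<in>S. K i j * u j))"
  using assms
proof (induction S arbitrary: K rule: finite_induct)
  case empty
  then show ?case by simp
next
  case (insert i S)
  define K' where "K' j l = K j l - K j i * K i l / K i i" for j l
  have sym: "K l i = K i l" if "l \<in> S" for l
    using insert.prems(1) that by blast
  have Z: "K j l \<le> 0" if "j \<in> insert i S" "l \<in> insert i S" "j \<noteq> l" for j l
    using insert.prems(2) that .
  have "\<exists>v. (\<forall>l\<in>S. 0 < v l) \<and> (\<forall>j\<in>S. 0 \<le> (\<Sum>l\<in>S. K' j l * v l))"
  proof (rule insert.IH)
    show "K' j l = K' l j" if "j \<in> S" "l \<in> S" for j l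
      using that insert.prems(1) unfolding K'_def by (simp add: sym mult.commute)
    show "K' j l \<le> 0" if "j \<in> S" "l \<in> S" "j \<noteq> l" for j l
    proof -
      have "0 \<le> K i i"
        by (rule quad_form_nonneg_diag[of "insert i S"]) (use insert.hyps insert.prems(3) in auto)
      moreover have "K j i \<le> 0" "K i l \<le> 0" "K j l \<le> 0"
        using Z that insert.hyps(2) by auto
      ultimately have "0 \<le> K j i * K i l / K i i"
        by (intro divide_nonneg_nonneg mult_nonpos_nonpos)
      with \<open>K j l \<le> 0\<close> show ?thesis
        unfolding K'_def by simp
    qed
    show "0 \<le> quad_form S K' y" for y
      unfolding K'_def by (rule quad_form_schur_complement_nonneg[OF insert.hyps sym insert.prems(3)])
  qed
  then obtain v where v: "\<And>l. l \<in> S \<Longrightarrow> 0 < v l" "\<And>j. j \<in> S \<Longrightarrow> 0 \<le> (\<Sum>l\<in>S. K' j l * v l)"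
    by blast
  obtain u where "\<And>l. l \<in> insert i S \<Longrightarrow> 0 < u l"
    "\<And>j. j \<in> insert i S \<Longrightarrow> 0 \<le> (\<Sum>l\<in>insert i S. K j l * u l)"
  proof (rule Z_matrix_positive_vector_insert[where K = K and v = v, OF insert.hyps sym])
    show "K i l \<le> 0" if "l \<in> S" for l
      using Z that insert.hyps(2) by auto
  qed (use insert.prems(3) v in \<open>auto simp: K'_def\<close>)
  then show ?case by blast
qed

lemma two_by_two_form_nonneg:
  fixes A B c xa xb ua ub :: real
  assumes ua: "0 < ua" and ub: "0 < ub"
    and A: "\<bar>c\<bar> * ub / ua \<le> A" and B: "\<bar>c\<bar> * ua / ub \<le> B"
  shows "0 \<le> A * xa\<^sup>2 + 2 * c * xa * xb + B * xb\<^sup>2"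
proof -
  have "2 * \<bar>xa\<bar> * \<bar>xb\<bar> \<le> ub / ua * xa\<^sup>2 + ua / ub * xb\<^sup>2"
  proof -
    have "0 \<le> (ub * \<bar>xa\<bar> - ua * \<bar>xb\<bar>)\<^sup>2 / (ua * ub)"
      using ua ub by simp
    also have "\<dots> = ub / ua * xa\<^sup>2 + ua / ub * xb\<^sup>2 - 2 * \<bar>xa\<bar> * \<bar>xb\<bar>"
      using ua ub by (simp add: field_simps power2_eq_square)
    finally show ?thesis by simp
  qed
  then have "- (2 * c * xa * xb) \<le> \<bar>c\<bar> * (ub / ua * xa\<^sup>2 + ua / ub * xb\<^sup>2)"
    using mult_left_mono[of _ _ "\<bar>c\<bar>"] abs_ge_minus_self[of "2 * c * xa * xb"]
    by (force simp: abs_mult)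
  also have "\<dots> = (\<bar>c\<bar> * ub / ua) * xa\<^sup>2 + (\<bar>c\<bar> * ua / ub) * xb\<^sup>2"
    by (simp add: algebra_simps)
  also have "\<dots> \<le> A * xa\<^sup>2 + B * xb\<^sup>2"
    using A B by (intro add_mono mult_right_mono) auto
  finally show ?thesis by simp
qed

lemma bipartite_sourcesE:
  assumes "bipartite_sources adj"
  obtains a b where "a \<noteq> b" "\<And>x. adj \<alpha> x \<longleftrightarrow> x = a \<or> x = b"
proof -
  have "card (parties_of adj \<alpha>) = 2"
    using assms unfolding bipartite_sources_def by blast
  then obtain a b where "parties_of adj \<alpha> = {a, b}" "a \<noteq> b"
    unfolding card_2_iff by blast
  then show ?thesis
    using that unfolding parties_of_def by blast
qed

lemma bipartite_sources_other_party:
  assumes "bipartite_sources adj" "adj \<alpha> i" "adj \<alpha> j" "i \<noteq> j" "adj \<alpha> x"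
  shows "x = i \<or> x = j"
  using bipartite_sourcesE[OF assms(1), of \<alpha>] assms(2-5) by metis

lemma network_common_source_unique:
  assumes net: "network adj" and bip: "bipartite_sources adj"
    and "i \<noteq> j" "adj \<alpha> i" "adj \<alpha> j" "adj \<beta> i" "adj \<beta> j"
  shows "\<alpha> = \<beta>"
proof (rule ccontr)
  assume "\<alpha> \<noteq> \<beta>"
  moreover have "parties_of adj \<alpha> \<subseteq> parties_of adj \<beta>"
    unfolding parties_of_def using bipartite_sources_other_party[OF bip, of \<alpha> i j] assms(3-7) by auto
  ultimately show False
    using net unfolding network_def by blast
qed

lemma sum_common_sources:
  fixes adj :: "'s::finite \<Rightarrow> 'p::finite \<Rightarrow> bool"
  assumes net: "network adj" and bip: "bipartite_sources adj" and "i \<noteq> j"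
  shows "(\<Sum>\<alpha>\<in>UNIV. if adj \<alpha> i \<and> adj \<alpha> j then c else 0) = (if share_source adj i j then c else 0)"
proof (cases "share_source adj i j")
  case True
  then obtain \<alpha>\<^sub>0 where "adj \<alpha>\<^sub>0 i" "adj \<alpha>\<^sub>0 j"
    unfolding share_source_def by blast
  then have "adj \<alpha> i \<and> adj \<alpha> j \<longleftrightarrow> \<alpha> = \<alpha>\<^sub>0" for \<alpha>
    using network_common_source_unique[OF net bip \<open>i \<noteq> j\<close>] by blast
  then show ?thesis
    using True by simp
next
  case False
  then have "(\<Sum>\<alpha>\<in>UNIV. if adj \<alpha> i \<and> adj \<alpha> j then c else 0) = 0"
    unfolding share_source_def by (intro sum.neutral) auto
  with False show ?thesis by simp
qed

section \<open>Decomposition along the sources\<close>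

definition comparison_matrix :: "('i \<Rightarrow> 'i \<Rightarrow> real) \<Rightarrow> 'i \<Rightarrow> 'i \<Rightarrow> real" where
  "comparison_matrix R i j = (if i = j then R i i else - \<bar>R i j\<bar>)"

lemma comparison_matrix_row:
  fixes R :: "'i::finite \<Rightarrow> 'i \<Rightarrow> real"
  shows "(\<Sum>l\<in>UNIV. comparison_matrix R i l * u l) = R i i * u i - (\<Sum>l\<in>UNIV - {i}. \<bar>R i l\<bar> * u l)"
proof -
  have "(\<Sum>l\<in>UNIV - {i}. comparison_matrix R i l * u l) = - (\<Sum>l\<in>UNIV - {i}. \<bar>R i l\<bar> * u l)"
    unfolding comparison_matrix_def sum_negf[symmetric] by (intro sum.cong) auto
  then show ?thesis
    by (subst sum.remove[of UNIV i]) (simp_all add: comparison_matrix_def)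
qed

(* Row i of diag(u) K diag(u) is diagonally dominant: C_ii is split into the shares
   |C_im| u_m / u_i on the edges {i, m}, and the nonnegative rest (K u)_i / u_i is put on one
   chosen source at i. *)
definition source_block ::
  "('s \<Rightarrow> 'p::finite \<Rightarrow> bool) \<Rightarrow> ('p \<Rightarrow> 'p \<Rightarrow> real) \<Rightarrow> ('p \<Rightarrow> real) \<Rightarrow> 's \<Rightarrow> 'p \<Rightarrow> 'p \<Rightarrow> real" where
  "source_block adj R u \<alpha> i j =
     (if adj \<alpha> i \<and> adj \<alpha> j then
        if i = j then
          (\<Sum>m | m \<noteq> i \<and> adj \<alpha> m. \<bar>R i m\<bar> * u m / u i)
          + (if \<alpha> = (SOME \<beta>. adj \<beta> i) then (\<Sum>l\<in>UNIV. comparison_matrix R i l * u l) / u i else 0)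
        else R i j
      else 0)"

lemma psd_source_block:
  fixes R :: "'p::finite \<Rightarrow> 'p \<Rightarrow> real"
  assumes bip: "bipartite_sources adj" and sym: "\<And>i j. R i j = R j i"
    and pos: "\<And>i. 0 < u i" and rows: "\<And>i. 0 \<le> (\<Sum>l\<in>UNIV. comparison_matrix R i l * u l)"
  shows "psd (\<lambda>i j. complex_of_real (source_block adj R u \<alpha> i j))"
proof (rule psd_of_real)
  show "source_block adj R u \<alpha> i j = source_block adj R u \<alpha> j i" for i j
    unfolding source_block_def using sym[of i j] by auto
next
  fix x :: "'p \<Rightarrow> real"
  let ?L = "source_block adj R u \<alpha>"
  obtain a b where ab: "a \<noteq> b" and adj: "\<And>y. adj \<alpha> y \<longleftrightarrow> y = a \<or> y = b"
    using bipartite_sourcesE[OF bip] by metis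
  have "quad_form UNIV ?L x = quad_form {a, b} ?L x"
    by (rule quad_form_mono_neutral) (auto simp: source_block_def adj)
  also have "\<dots> = ?L a a * (x a)\<^sup>2 + 2 * R a b * x a * x b + ?L b b * (x b)\<^sup>2"
    using ab sym[of a b] by (simp add: quad_form_def source_block_def adj power2_eq_square algebra_simps)
  also have "\<dots> \<ge> 0"
  proof (rule two_by_two_form_nonneg[OF pos pos])
    have "{m. m \<noteq> a \<and> adj \<alpha> m} = {b}" "{m. m \<noteq> b \<and> adj \<alpha> m} = {a}"
      using ab adj by auto
    then show "\<bar>R a b\<bar> * u b / u a \<le> ?L a a" "\<bar>R a b\<bar> * u a / u b \<le> ?L b b"
      using rows[of a] rows[of b] pos[of a] pos[of b] sym[of a b]
      by (auto simp: source_block_def adj)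
  qed
  finally show "0 \<le> quad_form UNIV ?L x" .
qed

lemma sum_source_block:
  fixes adj :: "'s::finite \<Rightarrow> 'p::finite \<Rightarrow> bool" and R :: "'p \<Rightarrow> 'p \<Rightarrow> real"
  assumes net: "network adj" and bip: "bipartite_sources adj"
    and zero: "\<And>i j. i \<noteq> j \<Longrightarrow> \<not> share_source adj i j \<Longrightarrow> R i j = 0"
    and pos: "\<And>i. 0 < u i"
  shows "(\<Sum>\<alpha>\<in>UNIV. source_block adj R u \<alpha> i j) = R i j"
proof (cases "i = j")
  case False
  have "(\<Sum>\<alpha>\<in>UNIV. source_block adj R u \<alpha> i j) = (\<Sum>\<alpha>\<in>UNIV. if adj \<alpha> i \<and> adj \<alpha> j then R i j else 0)"
    unfolding source_block_def using False by (intro sum.cong) auto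
  also have "\<dots> = R i j"
    using sum_common_sources[OF net bip False, of "R i j"] zero[OF False] by presburger
  finally show ?thesis .
next
  case True
  define w where "w m = \<bar>R i m\<bar> * u m / u i" for m
  define \<alpha>\<^sub>i where "\<alpha>\<^sub>i = (SOME \<beta>. adj \<beta> i)"
  have "adj \<alpha>\<^sub>i i"
    unfolding \<alpha>\<^sub>i_def by (rule someI_ex) (use net in \<open>auto simp: network_def\<close>)
  have edges: "(\<Sum>\<alpha>\<in>UNIV. if adj \<alpha> i then (\<Sum>m | m \<noteq> i \<and> adj \<alpha> m. w m) else 0) = (\<Sum>m\<in>UNIV - {i}. w m)"
  proof -
    have "(\<Sum>\<alpha>\<in>UNIV. if adj \<alpha> i then (\<Sum>m | m \<noteq> i \<and> adj \<alpha> m. w m) else 0)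
        = (\<Sum>\<alpha>\<in>UNIV. \<Sum>m\<in>UNIV - {i}. if adj \<alpha> i \<and> adj \<alpha> m then w m else 0)"
      by (intro sum.cong refl) (auto simp: sum.inter_filter[symmetric] intro!: sum.cong)
    also have "\<dots> = (\<Sum>m\<in>UNIV - {i}. \<Sum>\<alpha>\<in>UNIV. if adj \<alpha> i \<and> adj \<alpha> m then w m else 0)"
      by (rule sum.swap)
    also have "\<dots> = (\<Sum>m\<in>UNIV - {i}. if share_source adj i m then w m else 0)"
      by (intro sum.cong refl sum_common_sources[OF net bip]) auto
    also have "\<dots> = (\<Sum>m\<in>UNIV - {i}. w m)"
      using zero by (intro sum.cong) (auto simp: w_def)
    finally show ?thesis .
  qed
  have "(\<Sum>\<alpha>\<in>UNIV. source_block adj R u \<alpha> i i) =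
      (\<Sum>\<alpha>\<in>UNIV. if adj \<alpha> i then (\<Sum>m | m \<noteq> i \<and> adj \<alpha> m. w m) else 0)
      + (\<Sum>\<alpha>\<in>UNIV. if \<alpha> = \<alpha>\<^sub>i then (\<Sum>l\<in>UNIV. comparison_matrix R i l * u l) / u i else 0)"
    unfolding source_block_def w_def \<alpha>\<^sub>i_def[symmetric] sum.distrib[symmetric]
    using \<open>adj \<alpha>\<^sub>i i\<close> by (intro sum.cong) auto
  also have "\<dots> = R i i"
    unfolding edges unfolding comparison_matrix_row w_def using pos[of i]
    by (simp add: sum_divide_distrib[symmetric] field_simps)
  finally show ?thesis
    using True by simp
qed

lemma N_compatible_decomp_of_real:
  fixes adj :: "'s::finite \<Rightarrow> 'p::finite \<Rightarrow> bool" and R :: "'p \<Rightarrow> 'p \<Rightarrow> real"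
  assumes net: "network adj" and bip: "bipartite_sources adj"
    and sym: "\<And>i j. R i j = R j i"
    and zero: "\<And>i j. i \<noteq> j \<Longrightarrow> \<not> share_source adj i j \<Longrightarrow> R i j = 0"
    and comparison_psd: "\<And>x. 0 \<le> quad_form UNIV (comparison_matrix R) x"
  shows "N_compatible_decomp adj (\<lambda>i j. complex_of_real (R i j))"
proof -
  have "\<exists>u. (\<forall>i\<in>UNIV. 0 < u i) \<and> (\<forall>i\<in>UNIV. 0 \<le> (\<Sum>l\<in>UNIV. comparison_matrix R i l * u l))"
  proof (rule psd_Z_matrix_positive_vector)
    show "comparison_matrix R i j = comparison_matrix R j i" for i j
      by (simp add: comparison_matrix_def sym)
  qed (simp_all add: comparison_matrix_def comparison_psd[unfolded comparison_matrix_def])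
  then obtain u where pos: "\<And>i. 0 < u i" and rows: "\<And>i. 0 \<le> (\<Sum>l\<in>UNIV. comparison_matrix R i l * u l)"
    by blast
  show ?thesis
    unfolding N_compatible_decomp_def
  proof (intro exI[where x = "\<lambda>\<alpha> i j. complex_of_real (source_block adj R u \<alpha> i j)"] conjI allI impI)
    fix \<alpha> i j
    show "psd (\<lambda>i j. complex_of_real (source_block adj R u \<alpha> i j))"
      by (rule psd_source_block[OF bip sym pos rows])
    show "adj \<alpha> i" "adj \<alpha> j" if "complex_of_real (source_block adj R u \<alpha> i j) \<noteq> 0"
      using that unfolding source_block_def by (auto split: if_splits)
    show "complex_of_real (R i j) = (\<Sum>\<alpha>\<in>UNIV. complex_of_real (source_block adj R u \<alpha> i j))"
      using sum_source_block[where R = R and u = u, OF net bip zero pos] by (simp flip: of_real_sum)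
  qed
qed

definition output_mean :: "('p \<Rightarrow> 'a) pmf \<Rightarrow> ('p \<Rightarrow> 'a \<Rightarrow> real) \<Rightarrow> 'p \<Rightarrow> real" where
  "output_mean p f i = measure_pmf.expectation p (\<lambda>a. f i (a i))"

definition centered_output :: "('p \<Rightarrow> 'a) pmf \<Rightarrow> ('p \<Rightarrow> 'a \<Rightarrow> real) \<Rightarrow> 'p \<Rightarrow> 'a \<Rightarrow> real" where
  "centered_output p f i z = f i z - output_mean p f i"

definition output_cov :: "('p \<Rightarrow> 'a) pmf \<Rightarrow> ('p \<Rightarrow> 'a \<Rightarrow> real) \<Rightarrow> 'p \<Rightarrow> 'p \<Rightarrow> real" where
  "output_cov p f i j =
     measure_pmf.expectation p (\<lambda>a. centered_output p f i (a i) * centered_output p f j (a j))"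

lemma output_cov_sym: "output_cov p f i j = output_cov p f j i"
  unfolding output_cov_def by (simp add: mult.commute)

lemma cov_matrix_of_real:
  fixes p :: "('p::finite \<Rightarrow> 'a::finite) pmf"
  shows "cov_matrix p (\<lambda>i x. complex_of_real (f i x)) = (\<lambda>i j. complex_of_real (output_cov p f i j))"
proof (intro ext)
  fix i j
  let ?E = "measure_pmf.expectation p"
  have "(\<lambda>a. centered_output p f i (a i) * centered_output p f j (a j)) =
      (\<lambda>a. f i (a i) * f j (a j) - output_mean p f j * f i (a i) - output_mean p f i * f j (a j)
        + output_mean p f i * output_mean p f j)"
    unfolding centered_output_def by (auto simp: algebra_simps)
  then have "output_cov p f i j = ?E (\<lambda>a. f i (a i) * f j (a j)) - output_mean p f i * output_mean p f j"
    unfolding output_cov_def by (simp add: Bochner_Integration.integral_diff Bochner_Integration.integral_add output_mean_def)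
  moreover have "(\<lambda>a. cnj (complex_of_real (f i (a i))) * complex_of_real (f j (a j))) =
      (\<lambda>a. complex_of_real (f i (a i) * f j (a j)))"
    by simp
  ultimately show "cov_matrix p (\<lambda>i x. complex_of_real (f i x)) i j = complex_of_real (output_cov p f i j)"
    unfolding cov_matrix_def output_mean_def by (simp only: integral_complex_of_real) simp
qed

lemma psd_output_cov:
  fixes p :: "('p::finite \<Rightarrow> 'a::finite) pmf"
  shows "psd (\<lambda>i j. complex_of_real (output_cov p f i j))"
  using output_cov_sym quad_form_second_moments_nonneg
  unfolding output_cov_def by (rule psd_of_real)

lemma expectation_pair_pmf_mult:
  fixes A B :: "'a::finite pmf" and g h :: "'a \<Rightarrow> real"
  shows "measure_pmf.expectation (pair_pmf A B) (\<lambda>z. g (fst z) * h (snd z)) =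
    measure_pmf.expectation A g * measure_pmf.expectation B h"
proof -
  have "measure_pmf.expectation (pair_pmf A B) (\<lambda>z. g (fst z) * h (snd z)) =
      (\<Sum>z\<in>UNIV. g (fst z) * h (snd z) * pmf (pair_pmf A B) z)"
    by (rule integral_measure_pmf_real) auto
  also have "\<dots> = (\<Sum>z\<in>UNIV \<times> UNIV. (g (fst z) * pmf A (fst z)) * (h (snd z) * pmf B (snd z)))"
    by (rule sum.cong) (auto simp: pmf_pair)
  also have "\<dots> = (\<Sum>x\<in>UNIV. \<Sum>y\<in>UNIV. (g x * pmf A x) * (h y * pmf B y))"
    by (simp add: sum.cartesian_product case_prod_beta)
  also have "\<dots> = measure_pmf.expectation A g * measure_pmf.expectation B h"
    by (simp add: integral_measure_pmf_real[of UNIV] sum_product)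
  finally show ?thesis .
qed

lemma expectation_centered_output_indep:
  fixes p :: "('p::finite \<Rightarrow> 'a::finite) pmf" and Q :: "('q \<Rightarrow> 'a) pmf"
  assumes "marg2 Q x y = pair_pmf (marg1 p i) (marg1 p j)"
  shows "measure_pmf.expectation Q (\<lambda>a. centered_output p f i (a x) * centered_output p f j (a y)) = 0"
proof -
  have "measure_pmf.expectation (marg1 p i) (centered_output p f i) = 0"
    unfolding marg1_def centered_output_def output_mean_def
    by (simp add: Bochner_Integration.integral_diff)
  have "measure_pmf.expectation Q (\<lambda>a. centered_output p f i (a x) * centered_output p f j (a y)) =
      measure_pmf.expectation (marg2 Q x y) (\<lambda>z. centered_output p f i (fst z) * centered_output p f j (snd z))"
    by (simp add: marg2_def)
  also have "\<dots> = 0"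
    using \<open>_ = 0\<close> unfolding assms by (simp add: expectation_pair_pmf_mult)
  finally show ?thesis .
qed

lemma expectation_centered_output_marg2:
  fixes p :: "('p \<Rightarrow> 'a) pmf" and Q :: "('q \<Rightarrow> 'a) pmf"
  assumes "marg2 Q x y = marg2 p i j"
  shows "measure_pmf.expectation Q (\<lambda>a. centered_output p f i (a x) * centered_output p f j (a y)) =
    output_cov p f i j"
  using arg_cong[OF assms, of "\<lambda>M. measure_pmf.expectation M (\<lambda>z. centered_output p f i (fst z) * centered_output p f j (snd z))"]
  unfolding marg2_def output_cov_def by simp

lemma expectation_centered_output_marg1:
  fixes p :: "('p \<Rightarrow> 'a) pmf" and Q :: "('q \<Rightarrow> 'a) pmf"
  assumes "marg1 Q x = marg1 p i"
  shows "measure_pmf.expectation Q (\<lambda>a. centered_output p f i (a x) * centered_output p f i (a x)) =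
    output_cov p f i i"
  using arg_cong[OF assms, of "\<lambda>M. measure_pmf.expectation M (\<lambda>z. centered_output p f i z * centered_output p f i z)"]
  unfolding marg1_def output_cov_def by simp

lemma output_cov_eq_0:
  fixes p :: "('p::finite \<Rightarrow> 'a::finite) pmf"
  assumes "causally_consistent adj p" "i \<noteq> j" "\<not> share_source adj i j"
  shows "output_cov p f i j = 0"
proof -
  have "marg2 p i j = pair_pmf (marg1 p i) (marg1 p j)"
    using assms unfolding causally_consistent_def by blast
  then show ?thesis
    unfolding output_cov_def by (rule expectation_centered_output_indep)
qed

section \<open>A twisted inflation of order two\<close>

definition inflation_distribution ::
  "('s \<Rightarrow> 'p \<Rightarrow> bool) \<Rightarrow> ('p \<Rightarrow> 'a) pmf \<Rightarrow> nat \<Rightarrow> ('s \<Rightarrow> 'p \<Rightarrow> nat \<Rightarrow> nat) \<Rightarrow> ('p \<times> nat \<Rightarrow> 'a) pmf \<Rightarrow> bool"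
  where
  "inflation_distribution adj p d \<pi> q \<longleftrightarrow>
     (\<forall>i k. k \<in> {1..d} \<longrightarrow> marg1 q (i, k) = marg1 p i) \<and>
     (\<forall>i j k l. i \<noteq> j \<and> k \<in> {1..d} \<and> l \<in> {1..d} \<and> infl_share_source adj \<pi> (i, k) (j, l) \<longrightarrow>
        marg2 q (i, k) (j, l) = marg2 p i j) \<and>
     (\<forall>x y. x \<noteq> y \<and> snd x \<in> {1..d} \<and> snd y \<in> {1..d} \<and> \<not> infl_share_source adj \<pi> x y \<longrightarrow>
        marg2 q x y = pair_pmf (marg1 q x) (marg1 q y))"

lemma causally_consistent_inflation_distribution:
  assumes "causally_consistent adj p" "inflation_perms adj d \<pi>"
  obtains q where "inflation_distribution adj p d \<pi> q"
proof -
  have "\<exists>q. inflation_distribution adj p d \<pi> q"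
    unfolding inflation_distribution_def
    by (rule assms(1)[unfolded causally_consistent_def, THEN conjunct2, rule_format, OF assms(2)])
  with that show ?thesis
    by blast
qed

lemma not_infl_share_source_same_party:
  assumes "inflation_perms adj d \<pi>" "k \<noteq> l" "k \<in> {1..d}" "l \<in> {1..d}"
  shows "\<not> infl_share_source adj \<pi> (i, k) (i, l)"
proof
  assume "infl_share_source adj \<pi> (i, k) (i, l)"
  then obtain \<alpha> where "adj \<alpha> i" "\<pi> \<alpha> i k = \<pi> \<alpha> i l"
    unfolding infl_share_source_def by auto
  moreover from this(1) have "inj_on (\<pi> \<alpha> i) {1..d}"
    using assms(1) unfolding inflation_perms_def by (blast dest: bij_betw_imp_inj_on)
  ultimately show False
    using assms(2-4) by (auto dest: inj_onD)
qed

definition copy_cov :: "('p \<Rightarrow> 'a) pmf \<Rightarrow> ('p \<Rightarrow> 'a \<Rightarrow> real) \<Rightarrow> ('p \<times> nat \<Rightarrow> 'a) pmf \<Rightarrow> 'p \<times> nat \<Rightarrow> 'p \<times> nat \<Rightarrow> real" where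
  "copy_cov p f q x y =
     measure_pmf.expectation q (\<lambda>a. centered_output p f (fst x) (a x) * centered_output p f (fst y) (a y))"

lemma copy_cov_inflation:
  fixes p :: "('p::finite \<Rightarrow> 'a::finite) pmf"
  assumes \<pi>: "inflation_perms adj d \<pi>" and q: "inflation_distribution adj p d \<pi> q"
    and kl: "k \<in> {1..d}" "l \<in> {1..d}"
  shows "copy_cov p f q (i, k) (j, l) =
    (if i = j \<and> k = l then output_cov p f i i
     else if infl_share_source adj \<pi> (i, k) (j, l) then output_cov p f i j else 0)"
proof -
  note q = q[unfolded inflation_distribution_def]
  note copy_cov_def[simp]
  have marg1_q: "marg1 q (i', k') = marg1 p i'" if "k' \<in> {1..d}" for i' k'
    using conjunct1[OF q] that by blast
  consider "i = j \<and> k = l" | "i \<noteq> j" "infl_share_source adj \<pi> (i, k) (j, l)"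
    | "(i, k) \<noteq> (j, l)" "\<not> infl_share_source adj \<pi> (i, k) (j, l)"
    using not_infl_share_source_same_party[OF \<pi> _ kl] by blast
  then show ?thesis
  proof cases
    case 1
    then show ?thesis
      using expectation_centered_output_marg1[OF marg1_q[OF kl(1)]] by simp
  next
    case 2
    then have "marg2 q (i, k) (j, l) = marg2 p i j"
      using conjunct1[OF conjunct2[OF q]] kl by blast
    with 2 show ?thesis
      using expectation_centered_output_marg2 by simp
  next
    case 3
    then have "marg2 q (i, k) (j, l) = pair_pmf (marg1 q (i, k)) (marg1 q (j, l))"
      using conjunct2[OF conjunct2[OF q], rule_format, of "(i, k)" "(j, l)"] kl by simp
    also have "\<dots> = pair_pmf (marg1 p i) (marg1 p j)"
      using marg1_q kl by simp
    finally show ?thesis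
      using 3 expectation_centered_output_indep by auto
  qed
qed

definition twist_perm :: "('s \<Rightarrow> 'p \<Rightarrow> bool) \<Rightarrow> ('p \<Rightarrow> 'p \<Rightarrow> bool) \<Rightarrow> 's \<Rightarrow> 'p \<Rightarrow> nat \<Rightarrow> nat" where
  "twist_perm adj P \<alpha> i =
     (if (\<exists>j j'. j \<noteq> j' \<and> adj \<alpha> j \<and> adj \<alpha> j' \<and> P j j') \<and> i = (SOME j. adj \<alpha> j)
      then Transposition.transpose 1 2 else id)"

lemma inflation_perms_twist_perm: "inflation_perms adj 2 (twist_perm adj P)"
  unfolding inflation_perms_def twist_perm_def by simp

lemma twist_perm_eq_iff:
  assumes bip: "bipartite_sources adj" and sym: "\<And>i j. P i j \<longleftrightarrow> P j i"
    and ij: "adj \<alpha> i" "adj \<alpha> j" "i \<noteq> j" and kl: "k \<in> {1..2}" "l \<in> {1..2}"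
  shows "twist_perm adj P \<alpha> i k = twist_perm adj P \<alpha> j l \<longleftrightarrow> (k = l \<longleftrightarrow> \<not> P i j)"
proof -
  define lo where "lo = (SOME j. adj \<alpha> j)"
  have "adj \<alpha> lo"
    unfolding lo_def using ij(1) by (rule someI)
  then have lo: "lo = i \<or> lo = j"
    using bipartite_sources_other_party[OF bip ij] by blast
  have crossed: "(\<exists>j j'. j \<noteq> j' \<and> adj \<alpha> j \<and> adj \<alpha> j' \<and> P j j') \<longleftrightarrow> P i j"
    using bipartite_sources_other_party[OF bip ij] ij sym by metis
  have swap: "Transposition.transpose 1 2 k = l \<longleftrightarrow> k \<noteq> l" "k = Transposition.transpose 1 2 l \<longleftrightarrow> k \<noteq> l"
    using kl by (auto simp: Transposition.transpose_def)
  show ?thesis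
  proof (cases "lo = i")
    case True
    with ij(3) show ?thesis
      unfolding twist_perm_def lo_def[symmetric] crossed using swap by (cases "P i j") simp_all
  next
    case False
    with lo show ?thesis
      unfolding twist_perm_def lo_def[symmetric] crossed using swap by (cases "P i j") simp_all
  qed
qed

lemma infl_share_source_twist_perm:
  assumes bip: "bipartite_sources adj" and sym: "\<And>i j. P i j \<longleftrightarrow> P j i"
    and "i \<noteq> j" and kl: "k \<in> {1..2}" "l \<in> {1..2}"
  shows "infl_share_source adj (twist_perm adj P) (i, k) (j, l) \<longleftrightarrow>
    share_source adj i j \<and> (k = l \<longleftrightarrow> \<not> P i j)"
  unfolding infl_share_source_def share_source_def
  using twist_perm_eq_iff[OF bip sym _ _ \<open>i \<noteq> j\<close> kl] by auto

lemma copy_cov_twist_perm: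
  fixes adj :: "'s::finite \<Rightarrow> 'p::finite \<Rightarrow> bool" and p :: "('p \<Rightarrow> 'a::finite) pmf"
  assumes bip: "bipartite_sources adj" and cc: "causally_consistent adj p"
    and q: "inflation_distribution adj p 2 (twist_perm adj (\<lambda>i j. 0 < output_cov p f i j)) q"
  shows "copy_cov p f q (i, 1) (j, 1) - copy_cov p f q (i, 1) (j, 2)
      - copy_cov p f q (i, 2) (j, 1) + copy_cov p f q (i, 2) (j, 2) =
    2 * comparison_matrix (output_cov p f) i j"
proof -
  define R where "R = output_cov p f"
  define \<pi> where "\<pi> = twist_perm adj (\<lambda>i j. 0 < R i j)"
  have \<pi>: "inflation_perms adj 2 \<pi>"
    unfolding \<pi>_def by (rule inflation_perms_twist_perm)
  note copy_cov = copy_cov_inflation[OF \<pi> q[folded R_def, folded \<pi>_def], folded R_def]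
  show ?thesis
  proof (cases "i = j")
    case True
    then show ?thesis
      using not_infl_share_source_same_party[OF \<pi>, of 1 2] not_infl_share_source_same_party[OF \<pi>, of 2 1]
      by (simp add: copy_cov comparison_matrix_def R_def)
  next
    case ij: False
    have R_sym: "0 < R i j \<longleftrightarrow> 0 < R j i" for i j
      unfolding R_def by (simp add: output_cov_sym)
    have share: "infl_share_source adj \<pi> (i, k) (j, l) \<longleftrightarrow> share_source adj i j \<and> (k = l \<longleftrightarrow> \<not> 0 < R i j)"
      if "k \<in> {1..2}" "l \<in> {1..2}" for k l
      unfolding \<pi>_def using infl_share_source_twist_perm[OF bip R_sym ij that] by simp
    show ?thesis
    proof (cases "share_source adj i j")
      case False
      then have "R i j = 0"
        unfolding R_def using output_cov_eq_0[OF cc ij] by blast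
      with False ij show ?thesis
        by (simp add: copy_cov share comparison_matrix_def R_def)
    next
      case True
      with ij show ?thesis
        by (cases "0 < R i j") (simp_all add: copy_cov share comparison_matrix_def R_def)
    qed
  qed
qed

lemma quad_form_comparison_output_cov_nonneg:
  fixes adj :: "'s::finite \<Rightarrow> 'p::finite \<Rightarrow> bool" and p :: "('p \<Rightarrow> 'a::finite) pmf"
  assumes bip: "bipartite_sources adj" and cc: "causally_consistent adj p"
  shows "0 \<le> quad_form UNIV (comparison_matrix (output_cov p f)) x"
proof -
  obtain q where q: "inflation_distribution adj p 2 (twist_perm adj (\<lambda>i j. 0 < output_cov p f i j)) q"
    using causally_consistent_inflation_distribution[OF cc inflation_perms_twist_perm] .
  define c where "c = centered_output p f"
  define D where "D i b = c i (fst (b i)) - c i (snd (b i))" for i and b :: "'p \<Rightarrow> 'a \<times> 'a"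
  define r where "r = map_pmf (\<lambda>a i. (a (i, 1::nat), a (i, 2::nat))) q"
  have pushforward: "measure_pmf.expectation r (\<lambda>b. g (b i) * h (b j)) =
      measure_pmf.expectation q (\<lambda>a. g (a (i, 1), a (i, 2)) * (h (a (j, 1), a (j, 2)) :: real))" for g h i j
    unfolding r_def by simp
  have "measure_pmf.expectation r (\<lambda>b. D i b * D j b) = 2 * comparison_matrix (output_cov p f) i j" for i j
  proof -
    have "(\<lambda>b. D i b * D j b) = (\<lambda>b. c i (fst (b i)) * c j (fst (b j)) - c i (fst (b i)) * c j (snd (b j))
        - c i (snd (b i)) * c j (fst (b j)) + c i (snd (b i)) * c j (snd (b j)))"
      unfolding D_def by (auto simp: algebra_simps)
    then have "measure_pmf.expectation r (\<lambda>b. D i b * D j b) =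
        copy_cov p f q (i, 1) (j, 1) - copy_cov p f q (i, 1) (j, 2)
        - copy_cov p f q (i, 2) (j, 1) + copy_cov p f q (i, 2) (j, 2)"
      unfolding copy_cov_def fst_conv c_def[symmetric]
      by (simp add: Bochner_Integration.integral_diff Bochner_Integration.integral_add
          pushforward[where g = "\<lambda>z. c i (fst z)" and h = "\<lambda>z. c j (fst z)"]
          pushforward[where g = "\<lambda>z. c i (fst z)" and h = "\<lambda>z. c j (snd z)"]
          pushforward[where g = "\<lambda>z. c i (snd z)" and h = "\<lambda>z. c j (fst z)"]
          pushforward[where g = "\<lambda>z. c i (snd z)" and h = "\<lambda>z. c j (snd z)"])
    then show ?thesis
      using copy_cov_twist_perm[OF bip cc q, of i j] by linarith
  qed
  then have "2 * quad_form UNIV (comparison_matrix (output_cov p f)) x =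
      quad_form UNIV (\<lambda>i j. measure_pmf.expectation r (\<lambda>b. D i b * D j b)) x"
    by (simp only: quad_form_cmult)
  moreover have "0 \<le> quad_form UNIV (\<lambda>i j. measure_pmf.expectation r (\<lambda>b. D i b * D j b)) x"
    by (rule quad_form_second_moments_nonneg)
  ultimately show ?thesis
    by simp
qed

theorem theorem2:
  fixes adj :: "'s::finite \<Rightarrow> 'p::finite \<Rightarrow> bool"
    and p :: "('p \<Rightarrow> 'a::finite) pmf"
    and f :: "'p \<Rightarrow> 'a \<Rightarrow> real"
  assumes "network adj"
    and "bipartite_sources adj"
    and "causally_consistent adj p"
  shows "psd (cov_matrix p (\<lambda>i x. complex_of_real (f i x)))
    \<and> N_compatible_decomp adj (cov_matrix p (\<lambda>i x. complex_of_real (f i x)))"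
proof -
  have "output_cov p f i j = 0" if "i \<noteq> j" "\<not> share_source adj i j" for i j
    using output_cov_eq_0[OF assms(3) that] .
  then have "N_compatible_decomp adj (\<lambda>i j. complex_of_real (output_cov p f i j))"
    using quad_form_comparison_output_cov_nonneg[OF assms(2,3)]
    by (rule N_compatible_decomp_of_real[OF assms(1,2) output_cov_sym])
  then show ?thesis
    unfolding cov_matrix_of_real using psd_output_cov by blast
qed

end
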